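(* Let $R$ be a commutative ring and let $g(x)=\sum_{i\ge0}a_ix^i$ and $h(x)=\sum_{i\ge0}b_ix^i$ be formal power series in $R[[x]]$. Then $$g(x)\,h(x)=\sum_{m=0}^{\infty}x^m\sum_{k=0}^{m}\sigma_k\sum_{j=k}^{m}T(k+m-j,k)\,T(j,k)\Bigl(\sum_{t=j-k}^{j}T(k,j-t)\,\sigma_t\,a_t\Bigr)\Bigl(\sum_{t=j-k}^{j}T(k,j-t)\,\sigma_t\,b_t\Bigr).$$
   Context: For integers $0\le k\le n$, $T(n,k)=1$ if the bitwise AND of the binary expansions of $k$ and $n-k$ is $0$, and $T(n,k)=0$ otherwise (equivalently $T(n,k)=\binom{n}{k}\bmod 2$; this is the Sierpiński triangle, OEIS A047999). For an integer $k\ge0$, $\sigma_k=-1$ if the number of ones in the binary expansion of $k$ is odd and $\sigma_k=1$ otherwise. *)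

theory Defs
  imports Main "HOL-Computational_Algebra.Formal_Power_Series"
begin

definition sierp :: "nat \<Rightarrow> nat \<Rightarrow> int" where
  "sierp n k = (if k \<le> n \<and> and k (n - k) = 0 then 1 else 0)"

fun popcount :: "nat \<Rightarrow> nat" where
  "popcount n = (if n = 0 then 0 else n mod 2 + popcount (n div 2))"

declare popcount.simps[simp del]

definition sgnpc :: "nat \<Rightarrow> int" where
  "sgnpc k = (if odd (popcount k) then -1 else 1)"

end

theory Submission
  imports Defs "HOL-Library.Nat_Bijection"
begin

(* Identify a natural number with the set of positions of its binary digits (set_decode).
   Then T(n,k) = 1 iff k is a subset of n, T(k+r,k) = 1 iff k and r are disjoint, and
   sigma_k = (-1)^|k|.  In the m-th coefficient of the right-hand side, the coefficient of
   a_p b_q is a double sum over k within j, j <= m.  For fixed j the sum over k is an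
   alternating sum over an interval of the Boolean lattice, so it vanishes unless the interval
   is a single point, i.e. unless p, q lie within j and j AND (m - j) = p AND q.  Because
   x + y = (x OR y) + (x AND y), this says that j lies between p OR q and m - (p AND q), and the
   remaining alternating sum over j is again an interval sum: it is 1 if
   m - (p AND q) = p OR q, i.e. m = p + q, and 0 otherwise. *)

lemma set_decode_inject [simp]: "set_decode x = set_decode y \<longleftrightarrow> x = y"
  by (metis set_decode_inverse)

lemma set_decode_eq_empty_iff [simp]: "set_decode x = {} \<longleftrightarrow> x = 0"
  using set_decode_inject[of x 0] by simp

lemma bit_iff_in_set_decode: "bit x n \<longleftrightarrow> n \<in> set_decode x"
  by (simp add: set_decode_def bit_iff_odd)

lemma set_decode_and: "set_decode (and x y) = set_decode x \<inter> set_decode y"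
  by (auto simp flip: bit_iff_in_set_decode simp: bit_and_iff)

lemma set_decode_or: "set_decode (or x y) = set_decode x \<union> set_decode y"
  by (auto simp flip: bit_iff_in_set_decode simp: bit_or_iff)

lemma set_decode_add:
  assumes "set_decode x \<inter> set_decode y = {}"
  shows "set_decode (x + y) = set_decode x \<union> set_decode y"
proof -
  have "and x y = 0"
    using assms by (simp flip: set_decode_and)
  then show ?thesis
    by (simp add: disjunctive_add_eq_or set_decode_or)
qed

lemma set_decode_diff:
  assumes "set_decode k \<subseteq> set_decode n"
  shows "set_decode (n - k) = set_decode n - set_decode k"
proof -
  define d where "d = set_encode (set_decode n - set_decode k)"
  have d: "set_decode d = set_decode n - set_decode k"
    by (simp add: d_def)
  with assms have "set_decode (k + d) = set_decode n"
    by (subst set_decode_add) auto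
  then have "n - k = d"
    by simp
  with d show ?thesis
    by simp
qed

lemma add_eq_or_add_and: "(x::nat) + y = or x y + and x y"
proof -
  have "int (x + y) = int (or x y + and x y)"
    using plus_and_or[of "int x" "int y"] by (simp add: of_nat_and_eq of_nat_or_eq)
  then show ?thesis
    by (simp only: of_nat_eq_iff)
qed

lemma sierp_eq_subset: "sierp n k = (if set_decode k \<subseteq> set_decode n then 1 else 0)"
proof -
  have "k \<le> n \<and> and k (n - k) = 0 \<longleftrightarrow> set_decode k \<subseteq> set_decode n"
  proof
    assume "k \<le> n \<and> and k (n - k) = 0"
    then have "set_decode n = set_decode k \<union> set_decode (n - k)"
      using set_decode_add[of k "n - k"] by (simp flip: set_decode_and)
    then show "set_decode k \<subseteq> set_decode n"
      by blast
  next
    assume "set_decode k \<subseteq> set_decode n"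
    moreover have "set_decode (and k (n - k)) = {}"
      using calculation by (simp add: set_decode_and set_decode_diff)
    ultimately show "k \<le> n \<and> and k (n - k) = 0"
      by (simp add: subset_decode_imp_le)
  qed
  then show ?thesis
    by (simp add: sierp_def)
qed

lemma sierp_add_self: "sierp (k + r) k = (if set_decode k \<inter> set_decode r = {} then 1 else 0)"
  by (simp add: sierp_def flip: set_decode_and)

lemma popcount_eq_card: "popcount n = card (set_decode n)"
proof (induction n rule: less_induct)
  case (less n)
  show ?case
  proof (cases "n = 0")
    case True
    then show ?thesis
      by (simp add: popcount.simps)
  next
    case False
    have digits: "set_decode n = (if odd n then {0} else {}) \<union> Suc ` set_decode (n div 2)"
    proof (rule set_eqI)
      show "i \<in> set_decode n \<longleftrightarrow> i \<in> (if odd n then {0} else {}) \<union> Suc ` set_decode (n div 2)" for i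
        by (cases i) auto
    qed
    have "popcount (n div 2) = card (set_decode (n div 2))"
      using less False by simp
    with False show ?thesis
      by (subst popcount.simps) (auto simp: digits card_image odd_iff_mod_2_eq_one)
  qed
qed

lemma sgnpc_eq_card: "sgnpc n = (-1) ^ card (set_decode n)"
  by (simp add: sgnpc_def popcount_eq_card)

lemma sum_alternating_interval:
  assumes "finite X"
  shows "(\<Sum>K | A \<subseteq> K \<and> K \<subseteq> X. (-1) ^ card K) = (if A = X then (-1) ^ card A else (0::'a::ring_1))"
proof -
  consider "A \<subset> X" | "A = X" | "\<not> A \<subseteq> X"
    by blast
  then show ?thesis
  proof cases
    case 1
    have "finite {K. A \<subseteq> K \<and> K \<subseteq> X}"
      using assms by (simp add: finite_subset[of _ "Pow X"] subset_iff)
    moreover have "card {K. K \<in> {K. A \<subseteq> K \<and> K \<subseteq> X} \<and> even (card K)}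
        = card {K. K \<in> {K. A \<subseteq> K \<and> K \<subseteq> X} \<and> odd (card K)}"
      using card_subsupersets_even_odd[OF assms 1] by (simp add: conj_ac)
    ultimately have "(\<Sum>K | A \<subseteq> K \<and> K \<subseteq> X. (-1) ^ card K) = (0::'a)"
      by (rule sum_alternating_cancels)
    with 1 show ?thesis
      by auto
  next
    case 2
    then have "{K. A \<subseteq> K \<and> K \<subseteq> X} = {X}"
      by auto
    with 2 show ?thesis
      by simp
  next
    case 3
    then have empty: "{K. A \<subseteq> K \<and> K \<subseteq> X} = {}" and "A \<noteq> X"
      by auto
    then show ?thesis
      by (simp only: empty sum.empty if_False)
  qed
qed

lemma sum_alternating_submasks:
  assumes "n \<le> N"
  shows "(\<Sum>k=0..N. if A \<subseteq> set_decode k \<and> set_decode k \<subseteq> set_decode n then (-1) ^ card (set_decode k) else 0)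
       = (if A = set_decode n then (-1) ^ card A else (0::'a::ring_1))"
proof -
  let ?I = "{K. A \<subseteq> K \<and> K \<subseteq> set_decode n}"
  let ?S = "{k \<in> {0..N}. set_decode k \<in> ?I}"
  have image: "set_decode ` ?S = ?I"
  proof (intro equalityI subsetI)
    fix K
    assume K: "K \<in> ?I"
    then have "finite K"
      by (auto intro: finite_subset)
    then have decode: "set_decode (set_encode K) = K"
      by simp
    with K have "set_encode K \<le> n"
      by (intro subset_decode_imp_le) simp
    with K decode assms show "K \<in> set_decode ` ?S"
      by (auto intro!: image_eqI[of _ _ "set_encode K"])
  qed auto
  have inj: "inj_on set_decode ?S"
    by (rule inj_onI) simp
  have "(\<Sum>k=0..N. if A \<subseteq> set_decode k \<and> set_decode k \<subseteq> set_decode n then (-1) ^ card (set_decode k) else 0)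
      = (\<Sum>k\<in>?S. (-1::'a) ^ card (set_decode k))"
    by (simp only: sum.inter_filter[OF finite_atLeastAtMost] mem_Collect_eq)
  also have "\<dots> = (\<Sum>K\<in>?I. (-1) ^ card K)"
    by (rule sym, rule sum.reindex_cong[OF inj image[symmetric]], rule refl)
  also have "\<dots> = (if A = set_decode n then (-1) ^ card A else 0)"
    by (rule sum_alternating_interval) simp
  finally show ?thesis .
qed

definition sierp_window :: "nat \<Rightarrow> nat \<Rightarrow> nat \<Rightarrow> int" where
  "sierp_window k j t = (if j - k \<le> t \<and> t \<le> j then sierp k (j - t) * sgnpc t else 0)"

lemma sierp_window_eq:
  assumes "set_decode k \<subseteq> set_decode j"
  shows "sierp_window k j t =
    (if set_decode j - set_decode k \<subseteq> set_decode t \<and> set_decode t \<subseteq> set_decode j then sgnpc t else 0)"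
proof -
  have "j - k \<le> t \<and> t \<le> j \<and> set_decode (j - t) \<subseteq> set_decode k \<longleftrightarrow>
        set_decode j - set_decode k \<subseteq> set_decode t \<and> set_decode t \<subseteq> set_decode j"
  proof
    assume h: "j - k \<le> t \<and> t \<le> j \<and> set_decode (j - t) \<subseteq> set_decode k"
    with assms have "set_decode t = set_decode j - set_decode (j - t)"
      using set_decode_diff[of "j - t" j] by auto
    with h show "set_decode j - set_decode k \<subseteq> set_decode t \<and> set_decode t \<subseteq> set_decode j"
      by blast
  next
    assume h: "set_decode j - set_decode k \<subseteq> set_decode t \<and> set_decode t \<subseteq> set_decode j"
    then have "set_decode (j - t) \<subseteq> set_decode k"
      by (auto simp: set_decode_diff)
    moreover have "j - t \<le> k" "t \<le> j"
      using calculation h by (simp_all add: subset_decode_imp_le)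
    ultimately show "j - k \<le> t \<and> t \<le> j \<and> set_decode (j - t) \<subseteq> set_decode k"
      by auto
  qed
  then show ?thesis
    by (auto simp: sierp_window_def sierp_eq_subset)
qed

lemma card_union_add_card_diff_inter:
  assumes "finite J" "P \<union> Q \<subseteq> J"
  shows "card P + card Q + card (J - P \<inter> Q) = card (P \<union> Q) + card J"
proof -
  have "finite P" "finite Q"
    using assms finite_subset by blast+
  then have "card P + card Q = card (P \<union> Q) + card (P \<inter> Q)"
    by (rule card_Un_Int)
  moreover have "card (J - P \<inter> Q) = card J - card (P \<inter> Q)"
    using assms by (intro card_Diff_subset) (auto intro: finite_subset)
  moreover have "card (P \<inter> Q) \<le> card J"
    using assms by (intro card_mono) auto
  ultimately show ?thesis
    by linarith
qed

lemma sierp_kernel_sum_over_k: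
  assumes "j \<le> m"
  shows "(\<Sum>k=0..m. sgnpc k * sierp (k + m - j) k * sierp j k * sierp_window k j p * sierp_window k j q)
       = (if set_decode p \<union> set_decode q \<subseteq> set_decode j \<and> and j (m - j) = and p q
          then (-1) ^ (card (set_decode p \<union> set_decode q) + card (set_decode j)) else 0)"
proof -
  define P Q J R where "P = set_decode p" and "Q = set_decode q" and "J = set_decode j"
    and "R = set_decode (m - j)"
  define n where "n = j - and j (m - j)"
  have n: "set_decode n = J - R" "n \<le> m"
    using assms by (auto simp: n_def J_def R_def set_decode_diff set_decode_and)
  have summand: "sgnpc k * sierp (k + m - j) k * sierp j k * sierp_window k j p * sierp_window k j q
      = (if P \<union> Q \<subseteq> J then sgnpc p * sgnpc q else 0) *
        (if J - P \<inter> Q \<subseteq> set_decode k \<and> set_decode k \<subseteq> set_decode n then (-1) ^ card (set_decode k) else 0)"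
    for k
  proof (cases "set_decode k \<subseteq> J")
    case True
    have "sierp (k + m - j) k = (if set_decode k \<inter> R = {} then 1 else 0)"
      using assms sierp_add_self[of k "m - j"] by (simp add: R_def)
    with True show ?thesis
      by (auto simp: sierp_window_eq sierp_eq_subset sgnpc_eq_card n P_def Q_def J_def)
  next
    case False
    then show ?thesis
      by (auto simp: sierp_eq_subset n J_def)
  qed
  have "(\<Sum>k=0..m. sgnpc k * sierp (k + m - j) k * sierp j k * sierp_window k j p * sierp_window k j q)
      = (if P \<union> Q \<subseteq> J then sgnpc p * sgnpc q else 0) * (if J - P \<inter> Q = J - R then (-1) ^ card (J - P \<inter> Q) else 0)"
    by (simp only: summand sum_distrib_left[symmetric] sum_alternating_submasks[OF n(2)]) (simp only: n(1))
  also have "\<dots> = (if P \<union> Q \<subseteq> J \<and> and j (m - j) = and p q then (-1) ^ (card (P \<union> Q) + card J) else 0)"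
  proof (cases "P \<union> Q \<subseteq> J")
    case True
    then have "J - P \<inter> Q = J - R \<longleftrightarrow> and j (m - j) = and p q"
      by (auto simp flip: set_decode_inject simp: set_decode_and P_def Q_def J_def R_def)
    moreover have "sgnpc p * sgnpc q * (-1) ^ card (J - P \<inter> Q) = (-1) ^ (card (P \<union> Q) + card J)"
      using card_union_add_card_diff_inter[OF _ True] by (simp add: sgnpc_eq_card J_def P_def Q_def flip: power_add)
    ultimately show ?thesis
      using True by simp
  next
    case False
    then show ?thesis
      by (simp only: False if_False mult_zero_left simp_thms)
  qed
  finally show ?thesis
    by (simp add: P_def Q_def J_def)
qed

lemma and_eq_iff_subset_add_diff:
  fixes j r c :: nat
  assumes "set_decode c \<subseteq> set_decode j"
  shows "and j r = c \<longleftrightarrow> c \<le> j + r \<and> set_decode j \<subseteq> set_decode (j + r - c)"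
proof
  assume "and j r = c"
  then have "j + r - c = or j r" "c \<le> j + r"
    using add_eq_or_add_and[of j r] by simp_all
  then show "c \<le> j + r \<and> set_decode j \<subseteq> set_decode (j + r - c)"
    by (simp add: set_decode_or)
next
  assume h: "c \<le> j + r \<and> set_decode j \<subseteq> set_decode (j + r - c)"
  define u where "u = j + r - c"
  have "set_decode j \<subseteq> set_decode u"
    using h by (simp add: u_def)
  then have "j \<le> u" and "set_decode (u - j) = set_decode u - set_decode j"
    by (simp_all add: subset_decode_imp_le set_decode_diff)
  moreover from \<open>j \<le> u\<close> have "r = (u - j) + c"
    using h unfolding u_def by linarith
  ultimately have "set_decode r = (set_decode u - set_decode j) \<union> set_decode c"
    using assms set_decode_add[of "u - j" c] by auto
  with assms have "set_decode (and j r) = set_decode c"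
    by (auto simp: set_decode_and)
  then show "and j r = c"
    by simp
qed

lemma sierp_kernel_sum_over_j:
  "(\<Sum>j=0..m. if set_decode p \<union> set_decode q \<subseteq> set_decode j \<and> and j (m - j) = and p q
      then (-1) ^ (card (set_decode p \<union> set_decode q) + card (set_decode j)) else 0)
   = (if p + q = m then 1 else (0::int))"
proof -
  define S c where "S = set_decode (or p q)" and "c = and p q"
  have "S \<subseteq> set_decode j \<and> and j (m - j) = c \<longleftrightarrow> c \<le> m \<and> S \<subseteq> set_decode j \<and> set_decode j \<subseteq> set_decode (m - c)"
    if "j \<le> m" for j
  proof -
    have "S \<subseteq> set_decode j \<Longrightarrow> set_decode c \<subseteq> set_decode j"
      by (auto simp: S_def c_def set_decode_and set_decode_or)
    with that show ?thesis
      using and_eq_iff_subset_add_diff[of c j "m - j"] by auto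
  qed
  then have "(\<Sum>j=0..m. if set_decode p \<union> set_decode q \<subseteq> set_decode j \<and> and j (m - j) = and p q
      then (-1) ^ (card (set_decode p \<union> set_decode q) + card (set_decode j)) else 0)
    = (\<Sum>j=0..m. (if c \<le> m then (-1) ^ card S else 0) *
        (if S \<subseteq> set_decode j \<and> set_decode j \<subseteq> set_decode (m - c) then (-1) ^ card (set_decode j) else (0::int)))"
    by (intro sum.cong refl) (simp add: S_def c_def set_decode_or power_add)
  also have "\<dots> = (if c \<le> m then (-1) ^ card S else 0) * (if S = set_decode (m - c) then (-1) ^ card S else 0)"
    by (simp only: sum_distrib_left[symmetric] sum_alternating_submasks[OF diff_le_self])
  also have "\<dots> = (if c \<le> m \<and> or p q = m - c then 1 else 0)"
    by (auto simp: S_def simp flip: power_mult_distrib)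
  also have "\<dots> = (if p + q = m then 1 else 0)"
    using add_eq_or_add_and[of p q] by (auto simp: c_def)
  finally show ?thesis .
qed

definition sierp_kernel :: "nat \<Rightarrow> nat \<Rightarrow> nat \<Rightarrow> int" where
  "sierp_kernel m p q =
    (\<Sum>k=0..m. \<Sum>j=0..m. sgnpc k * sierp (k + m - j) k * sierp j k * sierp_window k j p * sierp_window k j q)"

lemma sierp_kernel_eq: "sierp_kernel m p q = (if p + q = m then 1 else 0)"
proof -
  have "sierp_kernel m p q =
    (\<Sum>j=0..m. \<Sum>k=0..m. sgnpc k * sierp (k + m - j) k * sierp j k * sierp_window k j p * sierp_window k j q)"
    unfolding sierp_kernel_def by (rule sum.swap)
  also have "\<dots> = (\<Sum>j=0..m. if set_decode p \<union> set_decode q \<subseteq> set_decode j \<and> and j (m - j) = and p q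
      then (-1) ^ (card (set_decode p \<union> set_decode q) + card (set_decode j)) else 0)"
    by (intro sum.cong refl) (simp add: sierp_kernel_sum_over_k)
  also have "\<dots> = (if p + q = m then 1 else 0)"
    by (rule sierp_kernel_sum_over_j)
  finally show ?thesis .
qed

lemma sum_sierp_window:
  fixes a :: "nat \<Rightarrow> 'a::comm_ring_1"
  assumes "j \<le> m"
  shows "(\<Sum>t = j - k..j. of_int (sierp k (j - t)) * of_int (sgnpc t) * a t) = (\<Sum>t=0..m. of_int (sierp_window k j t) * a t)"
  by (rule sym, rule sum.mono_neutral_cong_right) (use assms in \<open>auto simp: sierp_window_def\<close>)

lemma sum_swap_nested:
  "(\<Sum>k\<in>K. \<Sum>j\<in>J. \<Sum>p\<in>P. \<Sum>q\<in>Q. f k j p q) = (\<Sum>p\<in>P. \<Sum>q\<in>Q. \<Sum>k\<in>K. \<Sum>j\<in>J. f k j p q)"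
  by (simp only: sum.swap[where A = J and B = P] sum.swap[where A = J and B = Q]
      sum.swap[where A = K and B = P] sum.swap[where A = K and B = Q])

lemma sierp_coeff_expansion:
  fixes a b :: "nat \<Rightarrow> 'a::comm_ring_1"
  shows "(\<Sum>k = 0..m. of_int (sgnpc k) *
            (\<Sum>j = k..m. of_int (sierp (k + m - j) k) * of_int (sierp j k) *
               (\<Sum>t = j - k..j. of_int (sierp k (j - t)) * of_int (sgnpc t) * a t) *
               (\<Sum>t = j - k..j. of_int (sierp k (j - t)) * of_int (sgnpc t) * b t)))
       = (\<Sum>p=0..m. \<Sum>q=0..m. of_int (sierp_kernel m p q) * (a p * b q))"
proof -
  have vanishing: "sierp j k = 0" if "j < k" for j k
    using that by (simp add: sierp_def)
  have "(\<Sum>j = k..m. of_int (sierp (k + m - j) k) * of_int (sierp j k) *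
               (\<Sum>t = j - k..j. of_int (sierp k (j - t)) * of_int (sgnpc t) * a t) *
               (\<Sum>t = j - k..j. of_int (sierp k (j - t)) * of_int (sgnpc t) * b t))
      = (\<Sum>j=0..m. of_int (sierp (k + m - j) k) * of_int (sierp j k) *
               (\<Sum>p=0..m. of_int (sierp_window k j p) * a p) * (\<Sum>q=0..m. of_int (sierp_window k j q) * b q))"
    for k
    by (rule sum.mono_neutral_cong_left) (auto simp: vanishing sum_sierp_window)
  then have "(\<Sum>k = 0..m. of_int (sgnpc k) *
            (\<Sum>j = k..m. of_int (sierp (k + m - j) k) * of_int (sierp j k) *
               (\<Sum>t = j - k..j. of_int (sierp k (j - t)) * of_int (sgnpc t) * a t) *
               (\<Sum>t = j - k..j. of_int (sierp k (j - t)) * of_int (sgnpc t) * b t)))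
    = (\<Sum>k=0..m. \<Sum>j=0..m. \<Sum>p=0..m. \<Sum>q=0..m.
        of_int (sgnpc k * sierp (k + m - j) k * sierp j k * sierp_window k j p * sierp_window k j q) * (a p * b q))"
    by (simp add: sum_distrib_left sum_product mult_ac)
  also have "\<dots> = (\<Sum>p=0..m. \<Sum>q=0..m. \<Sum>k=0..m. \<Sum>j=0..m.
        of_int (sgnpc k * sierp (k + m - j) k * sierp j k * sierp_window k j p * sierp_window k j q) * (a p * b q))"
    by (rule sum_swap_nested)
  also have "\<dots> = (\<Sum>p=0..m. \<Sum>q=0..m. of_int (sierp_kernel m p q) * (a p * b q))"
    by (simp add: sierp_kernel_def of_int_sum sum_distrib_right)
  finally show ?thesis .
qed

theorem mainTheorem5:
  fixes g h :: "'a :: comm_ring_1 fps"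
  shows "g * h = Abs_fps (\<lambda>m. \<Sum>k = 0..m. of_int (sgnpc k) *
            (\<Sum>j = k..m. of_int (sierp (k + m - j) k) * of_int (sierp j k) *
               (\<Sum>t = j - k..j. of_int (sierp k (j - t)) * of_int (sgnpc t) * fps_nth g t) *
               (\<Sum>t = j - k..j. of_int (sierp k (j - t)) * of_int (sgnpc t) * fps_nth h t)))"
proof (rule fps_ext, goal_cases)
  case (1 m)
  have "(\<Sum>q=0..m. of_int (sierp_kernel m p q) * (fps_nth g p * fps_nth h q)) = fps_nth g p * fps_nth h (m - p)"
    if "p \<le> m" for p
  proof -
    have "(\<Sum>q=0..m. of_int (sierp_kernel m p q) * (fps_nth g p * fps_nth h q))
        = (\<Sum>q=0..m. if q = m - p then fps_nth g p * fps_nth h q else 0)"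
      using that by (intro sum.cong refl) (auto simp: sierp_kernel_eq)
    then show ?thesis
      by (simp add: sum.delta)
  qed
  then show ?case
    by (simp add: fps_mult_nth sierp_coeff_expansion)
qed

end
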